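(* Let $\mathcal{H}$ be a Hilbert space and $T\in\mathcal{B}(\mathcal{H})$ a convex operator, i.e. $T^{*2}T^2-2T^*T+I\ge0$. The following are equivalent: (i) $T$ has a $2$-isometric lifting; (ii) $T$ has a $2$-isometric lifting $S\in\mathcal{B}(\mathcal{K})$ with $\mathcal{K}\ominus\mathcal{H}\subset\operatorname{Ker}(S^*S-I)$; (iii) $\sup_{n\ge0}\frac{\|T^n\|^2}{n+1}<\infty$.
   Context: If $\mathcal{H}$ is a closed subspace of a Hilbert space $\mathcal{K}$ with orthogonal projection $P_{\mathcal{H}}$, an operator $S\in\mathcal{B}(\mathcal{K})$ is a lifting of $T\in\mathcal{B}(\mathcal{H})$ if $TP_{\mathcal{H}}=P_{\mathcal{H}}S$ (up to unitary identification of $\mathcal{H}$ with a subspace of $\mathcal{K}$). $S$ is a $2$-isometry if $S^{*2}S^2-2S^*S+I=0$. *)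

theory Defs
  imports "HOL-Analysis.Analysis"
begin

text \<open>A complex Hilbert space is modelled as a real Hilbert space (real inner product, complete)
  together with the multiplication by the imaginary unit, an orthogonal real-linear map
  squaring to minus the identity.\<close>

class chilbert = real_inner + complete_space +
  fixes imult :: "'a \<Rightarrow> 'a"
  assumes imult_add: "imult (x + y) = imult x + imult y"
    and imult_scaleR: "imult (r *\<^sub>R x) = r *\<^sub>R imult x"
    and imult_imult: "imult (imult x) = - x"
    and inner_imult_imult: "inner (imult x) (imult y) = inner x y"

text \<open>Complex scalar multiplication and the complex inner product
  (linear in the first, conjugate-linear in the second argument).\<close>

definition scaleC :: "complex \<Rightarrow> 'a::chilbert \<Rightarrow> 'a" where
  "scaleC c x = Re c *\<^sub>R x + Im c *\<^sub>R imult x"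

definition cinner :: "'a::chilbert \<Rightarrow> 'a \<Rightarrow> complex" where
  "cinner x y = Complex (inner x y) (inner x (imult y))"

section \<open>The Hilbert space l2(N; H)\<close>

typedef (overloaded) 'a l2 = "{f :: nat \<Rightarrow> 'a::real_inner. summable (\<lambda>n. (norm (f n))\<^sup>2)}"
  morphisms l2_fun Abs_l2
  by (rule exI[of _ "\<lambda>_. 0"]) simp

setup_lifting type_definition_l2

lemma l2_sq_add_bound:
  fixes a b :: "'a::real_normed_vector"
  shows "(norm (a + b))\<^sup>2 \<le> 2 * (norm a)\<^sup>2 + 2 * (norm b)\<^sup>2"
proof -
  have "(norm (a + b))\<^sup>2 \<le> (norm a + norm b)\<^sup>2"
    by (simp add: norm_triangle_ineq power_mono)
  also have "\<dots> \<le> 2 * (norm a)\<^sup>2 + 2 * (norm b)\<^sup>2"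
  proof -
    have "0 \<le> (norm a - norm b)\<^sup>2" by simp
    then show ?thesis unfolding power2_sum power2_diff by linarith
  qed
  finally show ?thesis .
qed

lemma summable_l2_add:
  fixes f g :: "nat \<Rightarrow> 'a::real_normed_vector"
  assumes "summable (\<lambda>n. (norm (f n))\<^sup>2)" "summable (\<lambda>n. (norm (g n))\<^sup>2)"
  shows "summable (\<lambda>n. (norm (f n + g n))\<^sup>2)"
proof (rule summable_comparison_test[where g = "\<lambda>n. 2 * (norm (f n))\<^sup>2 + 2 * (norm (g n))\<^sup>2"])
  show "\<exists>N. \<forall>n\<ge>N. norm ((norm (f n + g n))\<^sup>2) \<le> 2 * (norm (f n))\<^sup>2 + 2 * (norm (g n))\<^sup>2"
    using l2_sq_add_bound by auto
  show "summable (\<lambda>n. 2 * (norm (f n))\<^sup>2 + 2 * (norm (g n))\<^sup>2)"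
    using assms by (intro summable_add summable_mult)
qed

lemma summable_l2_inner:
  fixes f g :: "nat \<Rightarrow> 'a::real_inner"
  assumes "summable (\<lambda>n. (norm (f n))\<^sup>2)" "summable (\<lambda>n. (norm (g n))\<^sup>2)"
  shows "summable (\<lambda>n. inner (f n) (g n))"
proof (rule summable_comparison_test[where g = "\<lambda>n. (norm (f n))\<^sup>2 + (norm (g n))\<^sup>2"])
  have "\<bar>inner a b\<bar> \<le> (norm a)\<^sup>2 + (norm b)\<^sup>2" for a b :: 'a
  proof -
    have "\<bar>inner a b\<bar> \<le> norm a * norm b" by (rule Cauchy_Schwarz_ineq2)
    also have "\<dots> \<le> (norm a)\<^sup>2 + (norm b)\<^sup>2"
    proof -
      have "0 \<le> (norm a - norm b)\<^sup>2" by simp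
      moreover have "0 \<le> norm a * norm b" by simp
      ultimately show ?thesis unfolding power2_diff by linarith
    qed
    finally show ?thesis .
  qed
  then show "\<exists>N. \<forall>n\<ge>N. norm (inner (f n) (g n)) \<le> (norm (f n))\<^sup>2 + (norm (g n))\<^sup>2"
    by auto
  show "summable (\<lambda>n. (norm (f n))\<^sup>2 + (norm (g n))\<^sup>2)"
    using assms by (intro summable_add)
qed

instantiation l2 :: (real_inner) real_vector
begin

lift_definition zero_l2 :: "'a l2" is "\<lambda>_. 0" by simp

lift_definition plus_l2 :: "'a l2 \<Rightarrow> 'a l2 \<Rightarrow> 'a l2" is "\<lambda>f g n. f n + g n"
  by (rule summable_l2_add)

lift_definition uminus_l2 :: "'a l2 \<Rightarrow> 'a l2" is "\<lambda>f n. - f n" by simp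

lift_definition minus_l2 :: "'a l2 \<Rightarrow> 'a l2 \<Rightarrow> 'a l2" is "\<lambda>f g n. f n - g n"
proof -
  fix f g :: "nat \<Rightarrow> 'a"
  assume "summable (\<lambda>n. (norm (f n))\<^sup>2)" "summable (\<lambda>n. (norm (g n))\<^sup>2)"
  then have "summable (\<lambda>n. (norm (f n + - g n))\<^sup>2)"
    by (intro summable_l2_add) simp_all
  then show "summable (\<lambda>n. (norm (f n - g n))\<^sup>2)" by simp
qed

lift_definition scaleR_l2 :: "real \<Rightarrow> 'a l2 \<Rightarrow> 'a l2" is "\<lambda>r f n. r *\<^sub>R f n"
proof -
  fix r :: real and f :: "nat \<Rightarrow> 'a"
  assume "summable (\<lambda>n. (norm (f n))\<^sup>2)"
  then have "summable (\<lambda>n. r\<^sup>2 * (norm (f n))\<^sup>2)" by (rule summable_mult)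
  then show "summable (\<lambda>n. (norm (r *\<^sub>R f n))\<^sup>2)"
    by (simp add: power_mult_distrib)
qed

instance
  by standard (transfer; auto simp: fun_eq_iff algebra_simps)+

end

lemma summable_l2_fun: "summable (\<lambda>n. (norm (l2_fun x n))\<^sup>2)"
  using l2_fun[of x] by simp

instantiation l2 :: (real_inner) real_inner
begin

lift_definition inner_l2 :: "'a l2 \<Rightarrow> 'a l2 \<Rightarrow> real" is "\<lambda>f g. \<Sum>n. inner (f n) (g n)" .

definition norm_l2 :: "'a l2 \<Rightarrow> real" where "norm_l2 x = sqrt (inner x x)"

definition sgn_l2 :: "'a l2 \<Rightarrow> 'a l2" where "sgn_l2 x = x /\<^sub>R norm x"

definition dist_l2 :: "'a l2 \<Rightarrow> 'a l2 \<Rightarrow> real" where "dist_l2 x y = norm (x - y)"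

definition uniformity_l2 :: "('a l2 \<times> 'a l2) filter" where
  "uniformity_l2 = (INF e\<in>{0 <..}. principal {(x, y). dist x y < e})"

definition open_l2 :: "'a l2 set \<Rightarrow> bool" where
  "open_l2 U \<longleftrightarrow> (\<forall>x\<in>U. eventually (\<lambda>(x', y). x' = x \<longrightarrow> y \<in> U) uniformity)"

instance
proof
  fix x y z :: "'a l2" and r :: real
  show "inner x y = inner y x"
    by transfer (simp add: inner_commute)
  show "inner (x + y) z = inner x z + inner y z"
    by transfer (simp add: inner_add_left suminf_add summable_l2_inner)
  show "inner (r *\<^sub>R x) y = r * inner x y"
    by transfer (simp add: suminf_mult summable_l2_inner)
  show "0 \<le> inner x x"
    by transfer (auto intro: suminf_nonneg summable_l2_inner)
  show "inner x x = 0 \<longleftrightarrow> x = 0"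
  proof transfer
    fix f :: "nat \<Rightarrow> 'a"
    assume f: "summable (\<lambda>n. (norm (f n))\<^sup>2)"
    then have "summable (\<lambda>n. inner (f n) (f n))" by (rule summable_l2_inner[OF _ f])
    then show "((\<Sum>n. inner (f n) (f n)) = 0) = (f = (\<lambda>_. 0))"
      by (subst suminf_eq_zero_iff) (auto simp: fun_eq_iff)
  qed
  show "norm x = sqrt (inner x x)" by (simp add: norm_l2_def)
  show "sgn x = x /\<^sub>R norm x" by (simp add: sgn_l2_def)
  show "dist x y = norm (x - y)" by (simp add: dist_l2_def)
  show "(uniformity :: ('a l2 \<times> 'a l2) filter) = (INF e\<in>{0 <..}. principal {(x, y). dist x y < e})"
    by (simp add: uniformity_l2_def)
  fix U :: "'a l2 set"
  show "open U \<longleftrightarrow> (\<forall>x\<in>U. eventually (\<lambda>(x', y). x' = x \<longrightarrow> y \<in> U) uniformity)"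
    by (simp add: open_l2_def)
qed

end

lemma l2_norm_sq: "(norm x)\<^sup>2 = (\<Sum>n. (norm (l2_fun x n))\<^sup>2)"
  for x :: "'a::real_inner l2"
proof -
  have "(norm x)\<^sup>2 = inner x x" by (simp add: power2_norm_eq_inner)
  also have "\<dots> = (\<Sum>n. inner (l2_fun x n) (l2_fun x n))" by (simp add: inner_l2.rep_eq)
  also have "\<dots> = (\<Sum>n. (norm (l2_fun x n))\<^sup>2)" by (simp add: power2_norm_eq_inner)
  finally show ?thesis .
qed

lemma l2_partial_le: "(\<Sum>n<N. (norm (l2_fun x n))\<^sup>2) \<le> (norm x)\<^sup>2"
  for x :: "'a::real_inner l2"
  unfolding l2_norm_sq by (rule sum_le_suminf) (auto intro: summable_l2_fun)

lemma l2_coord_le: "norm (l2_fun x n) \<le> norm x"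
  for x :: "'a::real_inner l2"
proof -
  have "(norm (l2_fun x n))\<^sup>2 \<le> (\<Sum>m<Suc n. (norm (l2_fun x m))\<^sup>2)"
    by (rule member_le_sum) auto
  also have "\<dots> \<le> (norm x)\<^sup>2" by (rule l2_partial_le)
  finally show ?thesis by (rule power2_le_imp_le) simp
qed

instance l2 :: ("{real_inner,complete_space}") complete_space
proof
  fix X :: "nat \<Rightarrow> 'a l2" assume X: "Cauchy X"
  have coord: "Cauchy (\<lambda>k. l2_fun (X k) n)" for n
  proof (rule CauchyI)
    fix e :: real assume "0 < e"
    from CauchyD[OF X this] obtain M where M: "\<forall>m\<ge>M. \<forall>n\<ge>M. norm (X m - X n) < e" by blast
    show "\<exists>M. \<forall>m\<ge>M. \<forall>k\<ge>M. norm (l2_fun (X m) n - l2_fun (X k) n) < e"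
    proof (intro exI allI impI)
      fix m k assume "M \<le> m" "M \<le> k"
      have "norm (l2_fun (X m) n - l2_fun (X k) n) \<le> norm (X m - X k)"
        using l2_coord_le[of "X m - X k" n] by (simp add: minus_l2.rep_eq)
      also have "\<dots> < e" using M \<open>M \<le> m\<close> \<open>M \<le> k\<close> by blast
      finally show "norm (l2_fun (X m) n - l2_fun (X k) n) < e" .
    qed
  qed
  define g where "g n = lim (\<lambda>k. l2_fun (X k) n)" for n
  have g: "(\<lambda>k. l2_fun (X k) n) \<longlonglongrightarrow> g n" for n
    using Cauchy_convergent[OF coord[of n]] unfolding g_def by (simp add: convergent_LIMSEQ_iff)
  have bound: "(\<Sum>n<N. (norm (l2_fun (X k) n - g n))\<^sup>2) \<le> e\<^sup>2"
    if M: "\<forall>m\<ge>M. \<forall>k\<ge>M. norm (X m - X k) < e" and k: "M \<le> k" for M N e k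
  proof -
    have lim: "(\<lambda>j. \<Sum>n<N. (norm (l2_fun (X k) n - l2_fun (X j) n))\<^sup>2)
        \<longlonglongrightarrow> (\<Sum>n<N. (norm (l2_fun (X k) n - g n))\<^sup>2)"
      by (intro tendsto_intros g)
    have "\<forall>j\<ge>M. (\<Sum>n<N. (norm (l2_fun (X k) n - l2_fun (X j) n))\<^sup>2) \<le> e\<^sup>2"
    proof (intro allI impI)
      fix j assume j: "M \<le> j"
      have "(\<Sum>n<N. (norm (l2_fun (X k) n - l2_fun (X j) n))\<^sup>2) \<le> (norm (X k - X j))\<^sup>2"
        using l2_partial_le[where N=N and x="X k - X j"] by (simp add: minus_l2.rep_eq)
      also have "\<dots> \<le> e\<^sup>2"
        using M k j by (intro power_mono) (auto intro: less_imp_le)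
      finally show "(\<Sum>n<N. (norm (l2_fun (X k) n - l2_fun (X j) n))\<^sup>2) \<le> e\<^sup>2" .
    qed
    then show ?thesis using lim by (intro LIMSEQ_le_const2) auto
  qed
  obtain M0 where M0: "\<forall>m\<ge>M0. \<forall>k\<ge>M0. norm (X m - X k) < 1"
    using CauchyD[OF X, of 1] by auto
  have sumd: "summable (\<lambda>n. (norm (l2_fun (X M0) n - g n))\<^sup>2)"
    by (rule summableI_nonneg_bounded[where x = 1]) (use bound[OF M0, of M0] in auto)
  have "summable (\<lambda>n. (norm (l2_fun (X M0) n + - (l2_fun (X M0) n - g n)))\<^sup>2)"
    by (rule summable_l2_add[OF summable_l2_fun]) (use sumd in \<open>simp add: norm_minus_commute\<close>)
  then have gl2: "summable (\<lambda>n. (norm (g n))\<^sup>2)" by simp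
  define G where "G = Abs_l2 g"
  have G: "l2_fun G = g" using gl2 by (simp add: G_def Abs_l2_inverse)
  have "X \<longlonglongrightarrow> G"
  proof (rule LIMSEQ_I)
    fix r :: real assume r: "0 < r"
    then have "0 < r / 2" by simp
    from CauchyD[OF X this] obtain M where M: "\<forall>m\<ge>M. \<forall>k\<ge>M. norm (X m - X k) < r / 2" by blast
    show "\<exists>no. \<forall>n\<ge>no. norm (X n - G) < r"
    proof (intro exI allI impI)
      fix k assume k: "M \<le> k"
      have "(norm (X k - G))\<^sup>2 = (\<Sum>n. (norm (l2_fun (X k) n - g n))\<^sup>2)"
        by (simp add: l2_norm_sq minus_l2.rep_eq G)
      also have "\<dots> \<le> (r / 2)\<^sup>2"
      proof (rule suminf_le_const)
        show "summable (\<lambda>n. (norm (l2_fun (X k) n - g n))\<^sup>2)"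
          using summable_l2_fun[of "X k - G"] by (simp add: minus_l2.rep_eq G)
        show "\<And>N. (\<Sum>n<N. (norm (l2_fun (X k) n - g n))\<^sup>2) \<le> (r / 2)\<^sup>2"
          using bound[OF M k] .
      qed
      finally have "norm (X k - G) \<le> r / 2" by (rule power2_le_imp_le) (use r in simp)
      then show "norm (X k - G) < r" using r by simp
    qed
  qed
  then show "convergent X" by (rule convergentI)
qed

lemma norm_imult [simp]: "norm (imult x) = norm x"
  by (simp add: norm_eq_sqrt_inner inner_imult_imult)

instantiation l2 :: (chilbert) chilbert
begin

lift_definition imult_l2 :: "'a l2 \<Rightarrow> 'a l2" is "\<lambda>f n. imult (f n)" by simp

instance
  by standard (transfer; simp add: fun_eq_iff imult_add imult_scaleR imult_imult inner_imult_imult)+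

end

definition bounded_clinear_op :: "('a::chilbert \<Rightarrow> 'b::chilbert) \<Rightarrow> bool" where
  "bounded_clinear_op T \<longleftrightarrow> bounded_linear T \<and> (\<forall>x. T (imult x) = imult (T x))"

text \<open>Hilbert space adjoint (for complex-linear operators the adjoint with respect to the
  real part of the complex inner product coincides with the complex adjoint).\<close>

definition adjoint :: "('a::chilbert \<Rightarrow> 'b::chilbert) \<Rightarrow> 'b \<Rightarrow> 'a" where
  "adjoint T = (THE S. \<forall>x y. inner (T x) y = inner x (S y))"

definition positive_op :: "('a::chilbert \<Rightarrow> 'a) \<Rightarrow> bool" where
  "positive_op A \<longleftrightarrow> (\<forall>x. Im (cinner (A x) x) = 0 \<and> 0 \<le> Re (cinner (A x) x))"

definition convex_op :: "('a::chilbert \<Rightarrow> 'a) \<Rightarrow> bool" where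
  "convex_op T \<longleftrightarrow>
     positive_op (\<lambda>x. adjoint T (adjoint T (T (T x))) - 2 *\<^sub>R adjoint T (T x) + x)"

definition two_isometry :: "('a::chilbert \<Rightarrow> 'a) \<Rightarrow> bool" where
  "two_isometry S \<longleftrightarrow>
     (\<lambda>x. adjoint S (adjoint S (S (S x))) - 2 *\<^sub>R adjoint S (S x) + x) = (\<lambda>x. 0)"

text \<open>S in B(K) is a lifting of T in B(H), where H is identified with the subspace V(H) of K
  through the linear isometry V : H -> K.  Under this identification the orthogonal projection
  P_H : K -> H is the adjoint of V, and the lifting condition T P_H = P_H S reads
  T (V* k) = V* (S k).\<close>

definition is_lifting :: "('b::chilbert \<Rightarrow> 'b) \<Rightarrow> ('a::chilbert \<Rightarrow> 'b) \<Rightarrow> ('a \<Rightarrow> 'a) \<Rightarrow> bool" where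
  "is_lifting S V T \<longleftrightarrow>
     bounded_clinear_op S \<and> bounded_clinear_op V \<and> (\<forall>x. norm (V x) = norm x) \<and>
     (\<forall>k. T (adjoint V k) = adjoint V (S k))"

definition complement_in_ker :: "('b::chilbert \<Rightarrow> 'b) \<Rightarrow> ('a::chilbert \<Rightarrow> 'b) \<Rightarrow> bool" where
  "complement_in_ker S V \<longleftrightarrow>
     (\<forall>k. (\<forall>h. cinner k (V h) = 0) \<longrightarrow> adjoint S (S k) - k = 0)"

end

(*
  If S is a 2-isometry, n |-> ||S^n x||^2 is affine in n; as T^n is the compression of S^n to H,
  ||T^n||^2 then grows at most linearly.

  Conversely, convexity makes the increments ||T^(n+1) h||^2 - ||T^n h||^2 nondecreasing, and the
  bound ||T^n||^2 <= M (n + 1) bounds them by 2 M ||h||^2.  So Q(h) = sum_n <Delta_T T^n h, T^n h>,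
  with Delta_T = T*^2 T^2 - 2 T*T + I >= 0, is a bounded positive form; let R be the square root
  of the operator representing it.  On l2(N; H), with H as the first coordinate, the operator
  S (h0, h1, h2, ...) = (T h0, R h0, h1, h2, ...) satisfies ||S x||^2 = ||x||^2 + E(h0) for
  E(h) = ||T h||^2 + Q(h) - ||h||^2, and E(T h) = E(h) because Q(h) = <Delta_T h, h> + Q(T h).
  Hence ||S^2 x||^2 - 2 ||S x||^2 + ||x||^2 = 0, and S is isometric on the complement of H.
*)

theory Submission
  imports Defs "HOL-Computational_Algebra.Formal_Power_Series"
begin

instance chilbert \<subseteq> banach ..

section \<open>Riesz representation\<close>

lemma nonneg_quadratic_discriminant:
  fixes a b c :: real
  assumes nonneg: "\<And>t. 0 \<le> a + 2 * t * b + t\<^sup>2 * c" and "0 \<le> c"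
  shows "b\<^sup>2 \<le> a * c"
proof (cases "c = 0")
  case True
  have "b = 0"
  proof (rule ccontr)
    assume "b \<noteq> 0"
    define t where "t = - (\<bar>a\<bar> + 1) / (2 * b)"
    have "2 * t * b = - (\<bar>a\<bar> + 1)" using \<open>b \<noteq> 0\<close> by (simp add: t_def)
    moreover have "0 \<le> a + 2 * t * b" using nonneg[of t] True by simp
    ultimately show False using abs_ge_self[of a] by linarith
  qed
  with True show ?thesis by simp
next
  case False
  with \<open>0 \<le> c\<close> have "0 < c" by simp
  have "0 \<le> a + 2 * (- b / c) * b + (- b / c)\<^sup>2 * c" by (rule nonneg)
  also have "\<dots> = a - b\<^sup>2 / c" using \<open>0 < c\<close> by (simp add: power2_eq_square field_simps)
  finally show ?thesis using \<open>0 < c\<close> by (simp add: field_simps)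
qed

lemma psd_form_Cauchy_Schwarz:
  fixes B :: "'a::real_vector \<Rightarrow> 'a \<Rightarrow> real"
  assumes add: "\<And>x y z. B (x + y) z = B x z + B y z"
    and scale: "\<And>r x y. B (r *\<^sub>R x) y = r * B x y"
    and sym: "\<And>x y. B x y = B y x"
    and nonneg: "\<And>x. 0 \<le> B x x"
  shows "(B x y)\<^sup>2 \<le> B x x * B y y"
proof (rule nonneg_quadratic_discriminant)
  fix t
  have "B (x + t *\<^sub>R y) (x + t *\<^sub>R y) = B x x + 2 * t * B x y + t\<^sup>2 * B y y"
    using sym[of x "x + t *\<^sub>R y"] sym[of y "x + t *\<^sub>R y"] sym[of y x]
    by (simp add: add scale power2_eq_square algebra_simps)
  then show "0 \<le> B x x + 2 * t * B x y + t\<^sup>2 * B y y" using nonneg by metis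
qed (rule nonneg)

lemma parallelogram_law:
  fixes x y :: "'a::real_inner"
  shows "(norm (x - y))\<^sup>2 + (norm (x + y))\<^sup>2 = 2 * (norm x)\<^sup>2 + 2 * (norm y)\<^sup>2"
  by (simp add: power2_norm_eq_inner inner_add_left inner_add_right inner_diff_left
      inner_diff_right inner_commute)

lemma linear_functional_abs_le:
  fixes f :: "'a::real_normed_vector \<Rightarrow> real"
  assumes "linear f" and ball: "\<And>x. norm x \<le> 1 \<Longrightarrow> f x \<le> c"
  shows "\<bar>f y\<bar> \<le> c * norm y"
proof (cases "y = 0")
  case True
  then show ?thesis using linear_0[OF \<open>linear f\<close>] by simp
next
  case False
  interpret f: linear f by fact
  have "f (y /\<^sub>R norm y) \<le> c" "f (- (y /\<^sub>R norm y)) \<le> c"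
    using False by (auto intro!: ball)
  then have "f y / norm y \<le> c" "- f y / norm y \<le> c"
    by (simp_all add: f.scale f.neg divide_inverse mult.commute)
  with False show ?thesis by (simp add: abs_le_iff field_simps)
qed

lemma maximizing_sequence_Cauchy:
  fixes f :: "'a::real_inner \<Rightarrow> real"
  assumes "linear f" and "0 < L" and bound: "\<And>y. f y \<le> L * norm y"
    and unit: "\<And>n. norm (xs n) \<le> 1" and lim: "(\<lambda>n. f (xs n)) \<longlonglongrightarrow> L"
  shows "Cauchy xs"
proof (rule CauchyI)
  fix e :: real assume "0 < e"
  define d where "d = e\<^sup>2 / 8"
  have "L - L * d < L" using \<open>0 < L\<close> \<open>0 < e\<close> by (simp add: d_def)
  from order_tendstoD(1)[OF lim this] obtain N where N: "\<And>n. N \<le> n \<Longrightarrow> L - L * d < f (xs n)"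
    by (auto simp: eventually_sequentially)
  show "\<exists>N. \<forall>m\<ge>N. \<forall>n\<ge>N. norm (xs m - xs n) < e"
  proof (intro exI allI impI)
    fix m n assume "N \<le> m" "N \<le> n"
    \<comment> \<open>both points nearly maximise f, so their midpoint is nearly a unit vector\<close>
    have "L * (2 - 2 * d) < f (xs m + xs n)"
      using N[OF \<open>N \<le> m\<close>] N[OF \<open>N \<le> n\<close>] linear_add[OF \<open>linear f\<close>] by (simp add: algebra_simps)
    also have "\<dots> \<le> L * norm (xs m + xs n)" by (rule bound)
    finally have "2 - 2 * d < norm (xs m + xs n)" using \<open>0 < L\<close> by simp
    then have "4 - 8 * d < (norm (xs m + xs n))\<^sup>2"
    proof (cases "0 \<le> 2 - 2 * d")
      case True
      then have "(2 - 2 * d)\<^sup>2 < (norm (xs m + xs n))\<^sup>2"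
        using \<open>2 - 2 * d < _\<close> by (intro power_strict_mono) auto
      moreover have "4 - 8 * d \<le> (2 - 2 * d)\<^sup>2" by (simp add: power2_eq_square algebra_simps)
      ultimately show ?thesis by linarith
    next
      case False
      then show ?thesis by (smt (verit) zero_le_power2)
    qed
    moreover have "(norm (xs m))\<^sup>2 \<le> 1" "(norm (xs n))\<^sup>2 \<le> 1"
      using unit by (simp_all add: power_le_one)
    ultimately have "(norm (xs m - xs n))\<^sup>2 < e\<^sup>2"
      using parallelogram_law[of "xs m" "xs n"] by (simp add: d_def)
    then show "norm (xs m - xs n) < e" using \<open>0 < e\<close> by (simp add: power_less_imp_less_base)
  qed
qed

lemma onorm_approx_in_unit_ball:
  fixes f :: "'a::real_normed_vector \<Rightarrow> real"
  assumes "bounded_linear f" and "0 < e"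
  shows "\<exists>x. norm x \<le> 1 \<and> onorm f - e < f x"
proof (rule ccontr)
  have "linear f" using assms(1) by (rule bounded_linear.linear)
  assume none: "\<nexists>x. norm x \<le> 1 \<and> onorm f - e < f x"
  then have "\<bar>f y\<bar> \<le> (onorm f - e) * norm y" for y
    by (intro linear_functional_abs_le \<open>linear f\<close>) (auto simp: not_less)
  moreover have "0 \<le> onorm f - e"
    using none linear_0[OF \<open>linear f\<close>] by (metis norm_zero zero_less_one less_imp_le not_less)
  ultimately have "onorm f \<le> onorm f - e" by (intro onorm_bound) simp_all
  with \<open>0 < e\<close> show False by simp
qed

lemma bounded_linear_functional_attains_norm:
  fixes f :: "'a::{real_inner,complete_space} \<Rightarrow> real"
  assumes "bounded_linear f"
  shows "\<exists>x. norm x \<le> 1 \<and> (\<forall>y. \<bar>f y\<bar> \<le> f x * norm y)"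
proof -
  interpret f: bounded_linear f by fact
  define L where "L = onorm f"
  have bound: "\<bar>f y\<bar> \<le> L * norm y" for y
    using onorm[OF assms, of y] by (simp add: L_def)
  show ?thesis
  proof (cases "L = 0")
    case True
    then show ?thesis using bound by (intro exI[of _ 0]) auto
  next
    case False
    then have "0 < L" using onorm_pos_le[OF assms] by (simp add: L_def)
    have "\<exists>x. norm x \<le> 1 \<and> L - 1 / Suc n < f x" for n :: nat
      unfolding L_def by (rule onorm_approx_in_unit_ball[OF assms]) simp
    then obtain xs where unit: "\<And>n. norm (xs n) \<le> 1" and big: "\<And>n. L - 1 / Suc n < f (xs n)"
      by metis
    have small: "f (xs n) \<le> L" for n
      using bound[of "xs n"] mult_left_le[OF unit[of n], of L] \<open>0 < L\<close> by linarith
    have lower: "(\<lambda>n. L - 1 / Suc n) \<longlonglongrightarrow> L"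
      using tendsto_diff[OF tendsto_const LIMSEQ_Suc[OF lim_const_over_n[of 1]], of L] by simp
    have lim: "(\<lambda>n. f (xs n)) \<longlonglongrightarrow> L"
      by (rule real_tendsto_sandwich[OF _ _ lower tendsto_const])
        (use big small in \<open>auto intro!: always_eventually less_imp_le\<close>)
    have "Cauchy xs"
      by (rule maximizing_sequence_Cauchy[OF f.linear \<open>0 < L\<close> _ unit lim])
        (use bound abs_le_D1 in blast)
    then obtain x where x: "xs \<longlonglongrightarrow> x" using Cauchy_convergent convergent_def by blast
    have "norm x \<le> 1" by (rule LIMSEQ_le_const2[OF tendsto_norm[OF x]]) (use unit in auto)
    moreover have "f x = L" using LIMSEQ_unique[OF f.tendsto[OF x] lim] .
    ultimately show ?thesis using bound by blast
  qed
qed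

theorem riesz_representation:
  fixes f :: "'a::{real_inner,complete_space} \<Rightarrow> real"
  assumes "bounded_linear f"
  shows "\<exists>z. \<forall>y. f y = inner z y"
proof -
  interpret f: bounded_linear f by fact
  obtain x where "norm x \<le> 1" and bound: "\<And>y. \<bar>f y\<bar> \<le> f x * norm y"
    using bounded_linear_functional_attains_norm[OF assms] by blast
  define L where "L = f x"
  show ?thesis
  proof (cases "L = 0")
    case True
    then show ?thesis using bound by (intro exI[of _ 0]) (simp add: L_def)
  next
    case False
    have "\<bar>L\<bar> \<le> L * norm x" using bound[of x] by (simp add: L_def)
    then have "0 < L" using False by (smt (verit) mult_nonpos_nonneg norm_ge_zero)
    with \<open>\<bar>L\<bar> \<le> L * norm x\<close> \<open>norm x \<le> 1\<close> have "inner x x = 1"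
      by (simp add: norm_eq_1[symmetric])
    have sq_bound: "(f z)\<^sup>2 \<le> L\<^sup>2 * (norm z)\<^sup>2" for z
      using power_mono[OF bound[of z] abs_ge_zero, of 2] by (simp add: power_mult_distrib L_def)
    have "f y = inner (L *\<^sub>R x) y" for y
    proof -
      \<comment> \<open>x maximises f on the unit sphere, so the first variation of f at x vanishes\<close>
      have "(L * (L * inner x y - f y))\<^sup>2 \<le> 0 * (L\<^sup>2 * (norm y)\<^sup>2 - (f y)\<^sup>2)"
      proof (rule nonneg_quadratic_discriminant)
        fix t
        have "(norm (x + t *\<^sub>R y))\<^sup>2 = 1 + 2 * t * inner x y + t\<^sup>2 * (norm y)\<^sup>2"
          using \<open>inner x x = 1\<close> unfolding power2_norm_eq_inner
          by (simp add: inner_add_left inner_add_right inner_commute power2_eq_square algebra_simps)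
        moreover have "f (x + t *\<^sub>R y) = L + t * f y" by (simp add: f.add f.scale L_def)
        ultimately have "(L + t * f y)\<^sup>2 \<le> L\<^sup>2 * (1 + 2 * t * inner x y + t\<^sup>2 * (norm y)\<^sup>2)"
          using sq_bound[of "x + t *\<^sub>R y"] by simp
        then show "0 \<le> 0 + 2 * t * (L * (L * inner x y - f y)) + t\<^sup>2 * (L\<^sup>2 * (norm y)\<^sup>2 - (f y)\<^sup>2)"
          by (simp add: power2_eq_square algebra_simps)
      qed (use sq_bound[of y] in simp)
      then show ?thesis using \<open>0 < L\<close> by simp
    qed
    then show ?thesis by blast
  qed
qed

lemma adjoint_exists:
  fixes T :: "'a::{real_inner,complete_space} \<Rightarrow> 'b::real_inner"
  assumes "bounded_linear T"
  shows "\<exists>S. \<forall>x y. inner (T x) y = inner x (S y)"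
proof -
  have "\<exists>z. \<forall>x. inner (T x) y = inner z x" for y
    by (rule riesz_representation[OF bounded_linear_compose[OF bounded_linear_inner_left assms]])
  then show ?thesis by (metis inner_commute)
qed

lemma inner_adjoint:
  fixes T :: "'a::chilbert \<Rightarrow> 'b::chilbert"
  assumes "bounded_linear T"
  shows "inner (T x) y = inner x (adjoint T y)"
proof -
  let ?adj = "\<lambda>S. \<forall>x y. inner (T x) y = inner x (S y)"
  obtain S where S: "?adj S" using adjoint_exists[OF assms] by blast
  have "S' = S" if "?adj S'" for S'
    using that S by (metis ext vector_eq_ldot)
  with S have "?adj (adjoint T)" unfolding adjoint_def by (rule theI)
  then show ?thesis by blast
qed

section \<open>Cauchy products\<close>

lemma bilinear_square_minus_triangle:
  fixes a :: "nat \<Rightarrow> 'a::real_normed_vector" and b :: "nat \<Rightarrow> 'b::real_normed_vector"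
  assumes "bounded_bilinear p"
  shows "p (\<Sum>i<n. a i) (\<Sum>j<n. b j) - (\<Sum>k<n. \<Sum>i\<le>k. p (a i) (b (k - i)))
       = (\<Sum>(i, j) \<in> {..<n} \<times> {..<n} - {(i, j). i + j < n}. p (a i) (b j))"
proof -
  interpret bounded_bilinear p by fact
  have "p (\<Sum>i<n. a i) (\<Sum>j<n. b j) = (\<Sum>(i, j) \<in> {..<n} \<times> {..<n}. p (a i) (b j))"
    by (simp only: sum_left, simp only: sum_right sum.cartesian_product)
  moreover have "(\<Sum>k<n. \<Sum>i\<le>k. p (a i) (b (k - i))) = (\<Sum>(i, j) \<in> {(i, j). i + j < n}. p (a i) (b j))"
    using sum.triangle_reindex[of "\<lambda>i j. p (a i) (b j)" n] by simp
  moreover have "{(i, j). i + j < n} \<subseteq> {..<n} \<times> {..<n}" by auto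
  ultimately show ?thesis by (simp add: sum_diff)
qed

lemma bounded_bilinear_Cauchy_product_sums:
  fixes a :: "nat \<Rightarrow> 'a::banach" and b :: "nat \<Rightarrow> 'b::banach"
  assumes "bounded_bilinear p"
    and a: "summable (\<lambda>k. norm (a k))" and b: "summable (\<lambda>k. norm (b k))"
  shows "(\<lambda>k. \<Sum>i\<le>k. p (a i) (b (k - i))) sums p (\<Sum>k. a k) (\<Sum>k. b k)"
proof -
  interpret bounded_bilinear p by fact
  obtain K where K: "\<And>x y. norm (p x y) \<le> norm x * norm y * K" using bounded by blast
  define D where "D n = {..<n} \<times> {..<n} - {(i, j). i + j < n}" for n :: nat
  define A where "A n = p (\<Sum>i<n. a i) (\<Sum>j<n. b j)" for n
  define C where "C n = (\<Sum>k<n. \<Sum>i\<le>k. p (a i) (b (k - i)))" for n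
  \<comment> \<open>A - C is bounded by K times the same defect d for the series of norms,
    which vanishes by the Cauchy product theorem for real series\<close>
  define d where "d n = (\<Sum>i<n. norm (a i)) * (\<Sum>j<n. norm (b j))
      - (\<Sum>k<n. \<Sum>i\<le>k. norm (a i) * norm (b (k - i)))" for n
  have triangle: "(\<lambda>n. (\<Sum>k<n. \<Sum>i\<le>k. norm (a i) * norm (b (k - i))))
      \<longlonglongrightarrow> (\<Sum>k. norm (a k)) * (\<Sum>k. norm (b k))"
    using Cauchy_product_sums[of "\<lambda>k. norm (a k)" "\<lambda>k. norm (b k)"] a b by (simp add: sums_def)
  have square: "(\<lambda>n. (\<Sum>i<n. norm (a i)) * (\<Sum>j<n. norm (b j)))
      \<longlonglongrightarrow> (\<Sum>k. norm (a k)) * (\<Sum>k. norm (b k))"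
    by (intro tendsto_mult summable_LIMSEQ a b)
  have "d \<longlonglongrightarrow> 0"
    using tendsto_diff[OF square triangle] by (simp add: d_def[abs_def])
  then have lim0: "(\<lambda>n. d n * K) \<longlonglongrightarrow> 0" by (rule tendsto_mult_left_zero)
  have bound: "norm (A n - C n) \<le> d n * K" for n
  proof -
    have "norm (A n - C n) = norm (\<Sum>(i, j) \<in> D n. p (a i) (b j))"
      unfolding A_def C_def D_def by (simp add: bilinear_square_minus_triangle[OF assms(1)])
    also have "\<dots> \<le> (\<Sum>(i, j) \<in> D n. norm (a i) * norm (b j) * K)"
      by (rule order_trans[OF norm_sum sum_mono]) (use K in auto)
    also have "\<dots> = (\<Sum>(i, j) \<in> D n. norm (a i) * norm (b j)) * K"
      by (simp add: sum_distrib_right case_prod_unfold)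
    also have "(\<Sum>(i, j) \<in> D n. norm (a i) * norm (b j)) = d n"
      unfolding d_def D_def by (rule bilinear_square_minus_triangle[OF bounded_bilinear_mult, symmetric])
    finally show ?thesis .
  qed
  have "(\<lambda>n. A n - C n) \<longlonglongrightarrow> 0"
    by (rule Lim_null_comparison[OF always_eventually lim0]) (use bound in blast)
  moreover have "A \<longlonglongrightarrow> p (\<Sum>k. a k) (\<Sum>k. b k)"
    unfolding A_def
    by (intro tendsto summable_LIMSEQ summable_norm_cancel[OF a] summable_norm_cancel[OF b])
  ultimately have "(\<lambda>n. A n - (A n - C n)) \<longlonglongrightarrow> p (\<Sum>k. a k) (\<Sum>k. b k) - 0"
    by (intro tendsto_diff)
  then show ?thesis by (simp add: sums_def C_def)
qed

section \<open>Square roots of positive operators\<close>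

definition sqrt_one_minus_coeff :: "nat \<Rightarrow> real" where
  "sqrt_one_minus_coeff k = (- 1) ^ k * (1 / 2 gchoose k)"

lemma sqrt_one_minus_coeff_0 [simp]: "sqrt_one_minus_coeff 0 = 1"
  by (simp add: sqrt_one_minus_coeff_def)

lemma sqrt_one_minus_coeff_nonpos:
  assumes "0 < k" shows "sqrt_one_minus_coeff k \<le> 0"
proof -
  obtain j where k: "k = Suc j" using assms by (cases k) auto
  have "(- 1) ^ k * (1 / 2 gchoose k) = pochhammer (- 1 / 2 :: real) k / fact k"
    by (simp add: gbinomial_pochhammer power_mult_distrib[symmetric] mult.assoc[symmetric])
  moreover have "pochhammer (- 1 / 2 :: real) (Suc j) = - 1 / 2 * pochhammer (1 / 2) j"
    by (simp add: pochhammer_rec)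
  moreover have "0 < pochhammer (1 / 2 :: real) j" by (rule pochhammer_pos) simp
  ultimately show ?thesis by (simp add: sqrt_one_minus_coeff_def k divide_nonpos_pos)
qed

lemma sum_sqrt_one_minus_coeff_nonneg: "0 \<le> (\<Sum>k\<le>m. sqrt_one_minus_coeff k)"
proof -
  have "(\<Sum>k\<le>m. sqrt_one_minus_coeff k) = (- 1) ^ m * (- (1 / 2) gchoose m)"
    using gbinomial_sum_lower_neg[of "1 / 2 :: real" m]
    by (simp add: sqrt_one_minus_coeff_def mult.commute)
  also have "\<dots> = pochhammer (1 / 2) m / fact m"
    by (simp add: gbinomial_pochhammer power_mult_distrib[symmetric] mult.assoc[symmetric])
  also have "\<dots> \<ge> 0" by (intro divide_nonneg_pos less_imp_le pochhammer_pos) auto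
  finally show ?thesis .
qed

lemma summable_abs_sqrt_one_minus_coeff: "summable (\<lambda>k. \<bar>sqrt_one_minus_coeff k\<bar>)"
proof (rule summableI_nonneg_bounded[where x = 2])
  fix n
  show "(\<Sum>k<n. \<bar>sqrt_one_minus_coeff k\<bar>) \<le> 2"
  proof (cases n)
    case (Suc m)
    have "\<bar>sqrt_one_minus_coeff k\<bar> = (if k = 0 then 2 else 0) - sqrt_one_minus_coeff k" for k
      using sqrt_one_minus_coeff_nonpos[of k] by (cases "k = 0") auto
    then have "(\<Sum>k<n. \<bar>sqrt_one_minus_coeff k\<bar>) = 2 - (\<Sum>k\<le>m. sqrt_one_minus_coeff k)"
      using Suc by (simp add: sum_subtractf lessThan_Suc_atMost)
    then show ?thesis using sum_sqrt_one_minus_coeff_nonneg[of m] by simp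
  qed simp
qed simp

lemma sqrt_one_minus_coeff_convolution:
  "(\<Sum>i\<le>k. sqrt_one_minus_coeff i * sqrt_one_minus_coeff (k - i))
     = (if k = 0 then 1 else if k = 1 then - 1 else 0)"
proof -
  have "(\<Sum>i\<le>k. sqrt_one_minus_coeff i * sqrt_one_minus_coeff (k - i))
      = (- 1) ^ k * (\<Sum>i\<le>k. (1 / 2 gchoose i) * (1 / 2 gchoose (k - i)))"
    unfolding sum_distrib_left
  proof (rule sum.cong)
    fix i assume "i \<in> {..k}"
    then have "(- 1 :: real) ^ i * (- 1) ^ (k - i) = (- 1) ^ k" by (simp add: power_add[symmetric])
    moreover have "sqrt_one_minus_coeff i * sqrt_one_minus_coeff (k - i)
        = ((- 1) ^ i * (- 1) ^ (k - i)) * ((1 / 2 gchoose i) * (1 / 2 gchoose (k - i)))"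
      by (simp add: sqrt_one_minus_coeff_def mult_ac)
    ultimately show "sqrt_one_minus_coeff i * sqrt_one_minus_coeff (k - i)
        = (- 1) ^ k * ((1 / 2 gchoose i) * (1 / 2 gchoose (k - i)))"
      by simp
  qed simp
  \<comment> \<open>Vandermonde: the square of the binomial series of exponent 1/2 is that of exponent 1\<close>
  also have "(\<Sum>i\<le>k. (1 / 2 gchoose i) * (1 / 2 gchoose (k - i))) = (1 / 2 + 1 / 2 :: real) gchoose k"
    using gbinomial_Vandermonde[of "1 / 2 :: real" "1 / 2" k] by (simp add: atLeast0AtMost)
  also have "\<dots> = of_nat (1 choose k)" by (simp add: binomial_gbinomial)
  finally show ?thesis by (cases k; cases "k - 1") auto
qed

lemma bounded_linear_funpow:
  fixes X :: "'a::real_normed_vector \<Rightarrow> 'a"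
  assumes "bounded_linear X" shows "bounded_linear (X ^^ n)"
proof (induction n)
  case 0
  have "X ^^ 0 = (\<lambda>x. x)" by (simp add: fun_eq_iff)
  then show ?case using bounded_linear_ident by metis
next
  case (Suc n)
  show ?case using bounded_linear_compose[OF assms Suc.IH] by (simp add: o_def)
qed

lemma self_adjoint_contraction:
  fixes X :: "'a::real_inner \<Rightarrow> 'a"
  assumes "linear X" and self_adjoint: "\<And>h g. inner (X h) g = inner h (X g)"
    and nonneg: "\<And>h. 0 \<le> inner (X h) h" and le_id: "\<And>h. inner (X h) h \<le> (norm h)\<^sup>2"
  shows "norm (X h) \<le> norm h"
proof (cases "X h = 0")
  case False
  interpret X: linear X by fact
  have "((norm (X h))\<^sup>2)\<^sup>2 = (inner (X h) (X h))\<^sup>2" by (simp add: power2_norm_eq_inner)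
  also have "\<dots> \<le> inner (X h) h * inner (X (X h)) (X h)"
    by (rule psd_form_Cauchy_Schwarz[where B = "\<lambda>x y. inner (X x) y"])
      (auto simp: X.add X.scale inner_add_left nonneg intro: self_adjoint[THEN trans] inner_commute)
  also have "\<dots> \<le> (norm h)\<^sup>2 * (norm (X h))\<^sup>2"
    by (rule mult_mono[OF le_id le_id]) (simp_all add: nonneg)
  finally have "(norm (X h))\<^sup>2 * (norm (X h))\<^sup>2 \<le> (norm h)\<^sup>2 * (norm (X h))\<^sup>2"
    by (simp only: power2_eq_square[of "(norm (X h))\<^sup>2"])
  then have "(norm (X h))\<^sup>2 \<le> (norm h)\<^sup>2" by (rule mult_right_le_imp_le) (use False in simp)
  then show ?thesis by (rule power2_le_imp_le) simp
qed simp

definition sqrt_one_minus_op :: "('a::real_normed_vector \<Rightarrow> 'a) \<Rightarrow> 'a \<Rightarrow> 'a" where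
  "sqrt_one_minus_op X h = (\<Sum>k. sqrt_one_minus_coeff k *\<^sub>R (X ^^ k) h)"

locale contraction_op =
  fixes X :: "'a::banach \<Rightarrow> 'a"
  assumes bounded_linear: "bounded_linear X" and norm_le: "\<And>h. norm (X h) \<le> norm h"
begin

lemma norm_funpow_le: "norm ((X ^^ k) h) \<le> norm h"
  by (induction k) (auto intro: order_trans[OF norm_le])

lemma linear_funpow: "linear (X ^^ k)"
  by (rule bounded_linear.linear[OF bounded_linear_funpow[OF bounded_linear]])

lemma summable_norm_sqrt_one_minus_series:
  "summable (\<lambda>k. norm (sqrt_one_minus_coeff k *\<^sub>R (X ^^ k) h))"
proof (rule summable_comparison_test[OF _ summable_mult2[OF summable_abs_sqrt_one_minus_coeff]])
  show "\<exists>N. \<forall>k\<ge>N. norm (norm (sqrt_one_minus_coeff k *\<^sub>R (X ^^ k) h))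
      \<le> \<bar>sqrt_one_minus_coeff k\<bar> * norm h"
    using norm_funpow_le by (simp add: mult_left_mono)
qed

lemma sqrt_one_minus_op_sums:
  "(\<lambda>k. sqrt_one_minus_coeff k *\<^sub>R (X ^^ k) h) sums sqrt_one_minus_op X h"
  unfolding sqrt_one_minus_op_def
  by (rule summable_sums[OF summable_norm_cancel[OF summable_norm_sqrt_one_minus_series]])

lemma bounded_linear_sqrt_one_minus_op: "bounded_linear (sqrt_one_minus_op X)"
proof (rule bounded_linear_intro[where K = "\<Sum>k. \<bar>sqrt_one_minus_coeff k\<bar>"])
  show "sqrt_one_minus_op X (x + y) = sqrt_one_minus_op X x + sqrt_one_minus_op X y" for x y
    using sums_add[OF sqrt_one_minus_op_sums[of x] sqrt_one_minus_op_sums[of y]]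
      sqrt_one_minus_op_sums[of "x + y"]
    by (simp add: linear_add[OF linear_funpow] scaleR_add_right sums_unique2)
  show "sqrt_one_minus_op X (r *\<^sub>R x) = r *\<^sub>R sqrt_one_minus_op X x" for r x
    using sums_scaleR_right[OF sqrt_one_minus_op_sums[of x], of r]
      sqrt_one_minus_op_sums[of "r *\<^sub>R x"]
    by (simp add: linear_scale[OF linear_funpow] sums_unique2 mult.commute)
  show "norm (sqrt_one_minus_op X x) \<le> norm x * (\<Sum>k. \<bar>sqrt_one_minus_coeff k\<bar>)" for x
  proof -
    have "norm (sqrt_one_minus_op X x) \<le> (\<Sum>k. norm (sqrt_one_minus_coeff k *\<^sub>R (X ^^ k) x))"
      unfolding sqrt_one_minus_op_def by (rule summable_norm[OF summable_norm_sqrt_one_minus_series])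
    also have "\<dots> \<le> (\<Sum>k. \<bar>sqrt_one_minus_coeff k\<bar> * norm x)"
      by (intro suminf_le summable_norm_sqrt_one_minus_series
          summable_mult2[OF summable_abs_sqrt_one_minus_coeff])
        (use norm_funpow_le in \<open>auto intro: mult_left_mono\<close>)
    also have "\<dots> = norm x * (\<Sum>k. \<bar>sqrt_one_minus_coeff k\<bar>)"
      using suminf_mult2[OF summable_abs_sqrt_one_minus_coeff, of "norm x"] by (simp add: mult.commute)
    finally show ?thesis .
  qed
qed

lemma sqrt_one_minus_op_commute:
  assumes U: "bounded_linear U" and commute: "\<And>x. U (X x) = X (U x)"
  shows "U (sqrt_one_minus_op X h) = sqrt_one_minus_op X (U h)"
proof -
  have "U ((X ^^ k) x) = (X ^^ k) (U x)" for k x by (induction k) (simp_all add: commute)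
  then have "(\<lambda>k. sqrt_one_minus_coeff k *\<^sub>R (X ^^ k) (U h)) sums U (sqrt_one_minus_op X h)"
    using bounded_linear.sums[OF U sqrt_one_minus_op_sums[of h]]
    by (simp add: linear_scale[OF bounded_linear.linear[OF U]])
  then show ?thesis using sqrt_one_minus_op_sums[of "U h"] by (rule sums_unique2)
qed

lemma sqrt_one_minus_op_squared: "sqrt_one_minus_op X (sqrt_one_minus_op X h) = h - X h"
proof -
  define c where "c = sqrt_one_minus_coeff"
  define A where "A k = c k *\<^sub>R Blinfun (X ^^ k)" for k
  have A_apply: "blinfun_apply (A k) x = c k *\<^sub>R (X ^^ k) x" for k x
    by (simp add: A_def scaleR_blinfun.rep_eq
        bounded_linear_Blinfun_apply[OF bounded_linear_funpow[OF bounded_linear]])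
  have norm_A: "norm (A k) \<le> \<bar>c k\<bar>" for k
    by (rule norm_blinfun_bound) (use norm_funpow_le in \<open>auto simp: A_apply intro: mult_left_mono\<close>)
  have summable_A: "summable (\<lambda>k. norm (A k))"
    by (rule summable_comparison_test'[where N = 0, OF summable_abs_sqrt_one_minus_coeff])
      (simp add: norm_A[unfolded c_def])
  have sum_A_apply: "blinfun_apply (\<Sum>k. A k) x = sqrt_one_minus_op X x" for x
    using bounded_linear.sums[OF blinfun.bounded_linear_left
        summable_sums[OF summable_norm_cancel[OF summable_A]], of x] sqrt_one_minus_op_sums[of x]
    by (simp add: A_apply c_def sums_unique2)
  have "(\<lambda>k. \<Sum>i\<le>k. blinfun_apply (A i) (c (k - i) *\<^sub>R (X ^^ (k - i)) h))
      sums blinfun_apply (\<Sum>k. A k) (\<Sum>k. c k *\<^sub>R (X ^^ k) h)"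
    by (rule bounded_bilinear_Cauchy_product_sums[OF bounded_bilinear_blinfun_apply summable_A])
      (use summable_norm_sqrt_one_minus_series in \<open>simp add: c_def\<close>)
  moreover have "(\<Sum>i\<le>k. blinfun_apply (A i) (c (k - i) *\<^sub>R (X ^^ (k - i)) h))
      = (\<Sum>i\<le>k. c i * c (k - i)) *\<^sub>R (X ^^ k) h" for k
  proof -
    have "(X ^^ i) ((X ^^ (k - i)) h) = (X ^^ k) h" if "i \<le> k" for i
      using that funpow_add[of i "k - i" X] by (simp add: o_def)
    then show ?thesis
      by (simp add: A_apply scaleR_sum_left linear_scale[OF linear_funpow])
  qed
  ultimately have "(\<lambda>k. (if k = 0 then 1 else if k = 1 then - 1 else 0) *\<^sub>R (X ^^ k) h)
      sums sqrt_one_minus_op X (sqrt_one_minus_op X h)"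
    by (simp add: sum_A_apply c_def sqrt_one_minus_coeff_convolution flip: sqrt_one_minus_op_def)
  moreover have "(\<lambda>k. (if k = 0 then 1 else if k = 1 then - 1 else 0) *\<^sub>R (X ^^ k) h) sums (h - X h)"
    using sums_finite[of "{0, 1}" "\<lambda>k. (if k = 0 then 1 else if k = 1 then - 1 else 0) *\<^sub>R (X ^^ k) h"]
    by simp
  ultimately show ?thesis by (rule sums_unique2)
qed

end

lemma sqrt_one_minus_op_self_adjoint:
  fixes X :: "'a::{real_inner,banach} \<Rightarrow> 'a"
  assumes "contraction_op X" and self_adjoint: "\<And>h g. inner (X h) g = inner h (X g)"
  shows "inner (sqrt_one_minus_op X h) g = inner h (sqrt_one_minus_op X g)"
proof -
  interpret contraction_op X by fact
  have "inner ((X ^^ k) h) g = inner h ((X ^^ k) g)" for k g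
  proof (induction k arbitrary: g)
    case (Suc k)
    have "inner ((X ^^ Suc k) h) g = inner ((X ^^ k) h) (X g)" by (simp add: self_adjoint)
    also have "\<dots> = inner h ((X ^^ k) (X g))" by (rule Suc.IH)
    finally show ?case by (simp add: funpow_swap1)
  qed simp
  then have "(\<lambda>k. inner h (sqrt_one_minus_coeff k *\<^sub>R (X ^^ k) g)) sums inner (sqrt_one_minus_op X h) g"
    using bounded_linear.sums[OF bounded_linear_inner_left sqrt_one_minus_op_sums[of h]] by simp
  moreover have "(\<lambda>k. inner h (sqrt_one_minus_coeff k *\<^sub>R (X ^^ k) g)) sums inner h (sqrt_one_minus_op X g)"
    by (rule bounded_linear.sums[OF bounded_linear_inner_right sqrt_one_minus_op_sums])
  ultimately show ?thesis by (rule sums_unique2)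
qed

lemma contraction_op_id_minus_positive:
  fixes P :: "'a::{real_inner,banach} \<Rightarrow> 'a"
  assumes "bounded_linear P" and self_adjoint: "\<And>h g. inner (P h) g = inner h (P g)"
    and nonneg: "\<And>h. 0 \<le> inner (P h) h" and "0 < K" and K: "\<And>h. norm (P h) \<le> norm h * K"
  shows "contraction_op (\<lambda>h. h - (1 / K) *\<^sub>R P h)"
proof -
  define X where "X h = h - (1 / K) *\<^sub>R P h" for h
  have "bounded_linear X"
    unfolding X_def by (intro bounded_linear_sub bounded_linear_ident bounded_linear_scaleR_right
        bounded_linear_compose[OF _ assms(1)])
  moreover have "inner (X h) g = inner h (X g)" for h g
    by (simp add: X_def inner_diff_left inner_diff_right self_adjoint)
  moreover have "inner (P h) h \<le> K * (norm h)\<^sup>2" for h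
    using norm_cauchy_schwarz[of "P h" h] mult_right_mono[OF K[of h] norm_ge_zero[of h]]
    by (simp add: power2_eq_square algebra_simps)
  then have "0 \<le> inner (X h) h" "inner (X h) h \<le> (norm h)\<^sup>2" for h
    using nonneg[of h] \<open>0 < K\<close>
    by (simp_all add: X_def inner_diff_left power2_norm_eq_inner field_simps)
  ultimately have "contraction_op X"
    by (intro contraction_op.intro self_adjoint_contraction bounded_linear.linear) auto
  then show ?thesis by (simp add: X_def[abs_def])
qed

lemma positive_operator_sqrt:
  fixes P :: "'a::{real_inner,banach} \<Rightarrow> 'a"
  assumes "bounded_linear P" and self_adjoint: "\<And>h g. inner (P h) g = inner h (P g)"
    and nonneg: "\<And>h. 0 \<le> inner (P h) h"
  obtains R where "bounded_linear R" and "\<And>h g. inner (R h) (R g) = inner (P h) g"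
    and "\<And>U h. bounded_linear U \<Longrightarrow> (\<And>x. U (P x) = P (U x)) \<Longrightarrow> U (R h) = R (U h)"
proof -
  interpret P: bounded_linear P by fact
  obtain K where "0 < K" and K: "\<And>h. norm (P h) \<le> norm h * K" using P.pos_bounded by blast
  \<comment> \<open>0 \<le> X \<le> I, so P = K (I - X) has the square root sqrt K (I - X)^(1/2)\<close>
  define X where "X h = h - (1 / K) *\<^sub>R P h" for h
  have X_self_adjoint: "inner (X h) g = inner h (X g)" for h g
    by (simp add: X_def inner_diff_left inner_diff_right self_adjoint)
  have "contraction_op X"
    unfolding X_def[abs_def] by (rule contraction_op_id_minus_positive) fact+
  then interpret X: contraction_op X .
  define R where "R h = sqrt K *\<^sub>R sqrt_one_minus_op X h" for h
  show ?thesis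
  proof
    show "bounded_linear R"
      unfolding R_def
      by (rule bounded_linear_compose[OF bounded_linear_scaleR_right X.bounded_linear_sqrt_one_minus_op])
    show "inner (R h) (R g) = inner (P h) g" for h g
    proof -
      have "inner (R h) (R g) = K * inner h (sqrt_one_minus_op X (sqrt_one_minus_op X g))"
        using \<open>0 < K\<close>
        by (simp add: R_def sqrt_one_minus_op_self_adjoint[OF \<open>contraction_op X\<close> X_self_adjoint])
      also have "\<dots> = K * inner h (g - X g)" by (simp only: X.sqrt_one_minus_op_squared)
      also have "\<dots> = inner (P h) g" using \<open>0 < K\<close> by (simp add: X_def self_adjoint)
      finally show ?thesis .
    qed
    show "U (R h) = R (U h)" if U: "bounded_linear U" and commute: "\<And>x. U (P x) = P (U x)" for U h
    proof -
      interpret U: bounded_linear U by (fact U)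
      have "U (X x) = X (U x)" for x by (simp add: X_def U.diff U.scale commute)
      then show ?thesis by (simp add: R_def U.scale X.sqrt_one_minus_op_commute[OF U])
    qed
  qed
qed

section \<open>Growth of compressions of 2-isometries\<close>

lemma norm_le_sqrt_mult_norm:
  fixes x :: "'a::real_normed_vector" and y :: "'b::real_normed_vector"
  assumes "(norm y)\<^sup>2 \<le> A * (norm x)\<^sup>2"
  shows "norm y \<le> sqrt A * norm x"
  using real_le_rsqrt[OF assms] by (simp add: real_sqrt_mult)

lemma isometry_inner:
  fixes V :: "'a::real_inner \<Rightarrow> 'b::real_inner"
  assumes "linear V" and isometry: "\<And>x. norm (V x) = norm x"
  shows "inner (V x) (V y) = inner x y"
proof -
  have "(norm (V x + V y))\<^sup>2 = (norm (x + y))\<^sup>2"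
    using isometry[of "x + y"] by (simp add: linear_add[OF \<open>linear V\<close>])
  moreover have "inner (V z) (V z) = inner z z" for z
    using isometry[of z] by (metis power2_norm_eq_inner)
  ultimately show ?thesis
    by (simp add: power2_norm_eq_inner inner_add_left inner_add_right inner_commute)
qed

lemma adjoint_isometry_inverse:
  fixes V :: "'a::chilbert \<Rightarrow> 'b::chilbert"
  assumes "bounded_linear V" and "\<And>x. norm (V x) = norm x"
  shows "adjoint V (V x) = x"
  using isometry_inner[OF bounded_linear.linear[OF assms(1)] assms(2)]
  by (metis inner_adjoint[OF assms(1)] inner_commute vector_eq_rdot)

lemma norm_adjoint_isometry_le:
  fixes V :: "'a::chilbert \<Rightarrow> 'b::chilbert"
  assumes "bounded_linear V" and isometry: "\<And>x. norm (V x) = norm x"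
  shows "norm (adjoint V k) \<le> norm k"
proof -
  have "(norm (adjoint V k))\<^sup>2 = inner (V (adjoint V k)) k"
    by (simp add: inner_adjoint[OF assms(1)] power2_norm_eq_inner)
  also have "\<dots> \<le> norm (adjoint V k) * norm k"
    using norm_cauchy_schwarz[of "V (adjoint V k)" k] by (simp add: isometry)
  finally have "norm (adjoint V k) * norm (adjoint V k) \<le> norm (adjoint V k) * norm k"
    by (simp add: power2_eq_square)
  then show ?thesis by (cases "adjoint V k = 0") auto
qed

lemma lifting_funpow:
  assumes "is_lifting S V T"
  shows "(T ^^ n) x = adjoint V ((S ^^ n) (V x))"
proof -
  have "(T ^^ n) (adjoint V k) = adjoint V ((S ^^ n) k)" for k
    using assms by (induction n) (simp_all add: is_lifting_def)
  moreover have "adjoint V (V x) = x"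
    using assms by (intro adjoint_isometry_inverse) (simp_all add: is_lifting_def bounded_clinear_op_def)
  ultimately show ?thesis by metis
qed

lemma two_isometry_iff_inner:
  fixes S :: "'a::chilbert \<Rightarrow> 'a"
  assumes "bounded_linear S"
  shows "two_isometry S \<longleftrightarrow>
    (\<forall>x y. inner (S (S x)) (S (S y)) - 2 * inner (S x) (S y) + inner x y = 0)"
proof -
  have adjoint: "inner (adjoint S z) y = inner z (S y)" for z y
    by (metis inner_adjoint[OF assms] inner_commute)
  have "inner (adjoint S (adjoint S (S (S x))) - 2 *\<^sub>R adjoint S (S x) + x) y
      = inner (S (S x)) (S (S y)) - 2 * inner (S x) (S y) + inner x y" for x y
    by (simp add: adjoint inner_add_left inner_diff_left)
  then show ?thesis
    unfolding two_isometry_def fun_eq_iff by (metis inner_eq_zero_iff inner_zero_left)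
qed

lemma two_isometry_norm:
  assumes "bounded_linear S" and "two_isometry S"
  shows "(norm (S (S x)))\<^sup>2 = 2 * (norm (S x))\<^sup>2 - (norm x)\<^sup>2"
proof -
  have "inner (S (S x)) (S (S x)) - 2 * inner (S x) (S x) + inner x x = 0"
    using assms two_isometry_iff_inner by blast
  then show ?thesis by (simp add: power2_norm_eq_inner)
qed

lemma two_isometry_norm_funpow:
  assumes "bounded_linear S" and "two_isometry S"
  shows "(norm ((S ^^ n) x))\<^sup>2 = (norm x)\<^sup>2 + n * ((norm (S x))\<^sup>2 - (norm x)\<^sup>2)"
proof (induction n rule: less_induct)
  case (less n)
  show ?case
  proof (cases "n < 2")
    case True
    then show ?thesis by (cases n) auto
  next
    case False
    then obtain m where n: "n = Suc (Suc m)" by (metis add_2_eq_Suc le_add_diff_inverse not_less)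
    have "(norm ((S ^^ n) x))\<^sup>2 = 2 * (norm ((S ^^ Suc m) x))\<^sup>2 - (norm ((S ^^ m) x))\<^sup>2"
      using two_isometry_norm[OF assms, of "(S ^^ m) x"] by (simp add: n)
    then show ?thesis using less[of m] less[of "Suc m"] by (simp add: n algebra_simps)
  qed
qed

lemma two_isometry_norm_funpow_le:
  assumes "bounded_linear S" and "two_isometry S"
  shows "(norm ((S ^^ n) x))\<^sup>2 \<le> real (n + 1) * (1 + (onorm S)\<^sup>2) * (norm x)\<^sup>2"
proof -
  have "(norm (S x))\<^sup>2 \<le> (onorm S)\<^sup>2 * (norm x)\<^sup>2"
    using power_mono[OF onorm[OF assms(1), of x] norm_ge_zero, of 2] by (simp add: power_mult_distrib)
  then have "(norm ((S ^^ n) x))\<^sup>2 \<le> (norm x)\<^sup>2 + n * ((onorm S)\<^sup>2 * (norm x)\<^sup>2)"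
    unfolding two_isometry_norm_funpow[OF assms]
    by (intro add_left_mono mult_left_mono) (use zero_le_power2[of "norm x"] in linarith, simp)
  moreover have "real (n + 1) * (1 + (onorm S)\<^sup>2) * (norm x)\<^sup>2
      = (norm x)\<^sup>2 + n * ((onorm S)\<^sup>2 * (norm x)\<^sup>2) + (n * (norm x)\<^sup>2 + (onorm S)\<^sup>2 * (norm x)\<^sup>2)"
    by (simp add: algebra_simps)
  moreover have "0 \<le> n * (norm x)\<^sup>2 + (onorm S)\<^sup>2 * (norm x)\<^sup>2" by simp
  ultimately show ?thesis by linarith
qed

theorem two_isometric_lifting_imp_growth:
  assumes "bounded_linear T" and "is_lifting S V T" and "two_isometry S"
  shows "bdd_above (range (\<lambda>n. (onorm (T ^^ n))\<^sup>2 / real (n + 1)))"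
proof -
  have S: "bounded_linear S" and "bounded_linear V" and isometry: "\<And>x. norm (V x) = norm x"
    using assms(2) by (auto simp: is_lifting_def bounded_clinear_op_def)
  define C where "C = 1 + (onorm S)\<^sup>2"
  have "(onorm (T ^^ n))\<^sup>2 \<le> real (n + 1) * C" for n
  proof -
    have "norm ((T ^^ n) x) \<le> sqrt (real (n + 1) * C) * norm x" for x
    proof (rule norm_le_sqrt_mult_norm)
      have "norm ((T ^^ n) x) \<le> norm ((S ^^ n) (V x))"
        unfolding lifting_funpow[OF assms(2)]
        by (rule norm_adjoint_isometry_le[OF \<open>bounded_linear V\<close> isometry])
      then have "(norm ((T ^^ n) x))\<^sup>2 \<le> (norm ((S ^^ n) (V x)))\<^sup>2"
        by (rule power_mono) simp
      also have "\<dots> \<le> real (n + 1) * C * (norm x)\<^sup>2"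
        using two_isometry_norm_funpow_le[OF S assms(3), of n "V x"] by (simp add: C_def isometry)
      finally show "(norm ((T ^^ n) x))\<^sup>2 \<le> real (n + 1) * C * (norm x)\<^sup>2" .
    qed
    then have "onorm (T ^^ n) \<le> sqrt (real (n + 1) * C)"
      by (intro onorm_bound) (simp_all add: C_def)
    then have "(onorm (T ^^ n))\<^sup>2 \<le> (sqrt (real (n + 1) * C))\<^sup>2"
      by (rule power_mono) (rule onorm_pos_le[OF bounded_linear_funpow[OF assms(1)]])
    then show ?thesis by (simp add: C_def)
  qed
  then show ?thesis
    by (intro bdd_aboveI[of _ C]) (auto simp: divide_le_eq algebra_simps)
qed

section \<open>A 2-isometric lifting of a convex operator\<close>

lemma imult_zero [simp]: "imult (0 :: 'a::chilbert) = 0"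
  using imult_scaleR[of 0 "0 :: 'a"] by simp

lemma bounded_linear_imult: "bounded_linear (imult :: 'a::chilbert \<Rightarrow> 'a)"
  by (rule bounded_linear_intro[where K = 1]) (simp_all add: imult_add imult_scaleR)

lemma inner_imult_left: "inner (imult x) y = - inner x (imult y)"
  for x y :: "'a::chilbert"
  using inner_imult_imult[of "imult x" y] by (simp add: imult_imult)

locale convex_linear_growth =
  fixes T :: "'a::chilbert \<Rightarrow> 'a" and M :: real
  assumes clinear: "bounded_clinear_op T" and convex: "convex_op T"
    and growth: "\<And>n. (onorm (T ^^ n))\<^sup>2 / real (n + 1) \<le> M"
begin

sublocale T: bounded_linear T
  using clinear by (simp add: bounded_clinear_op_def)

lemma imult_commute: "T (imult x) = imult (T x)"
  using clinear by (simp add: bounded_clinear_op_def)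

lemma funpow_imult: "(T ^^ n) (imult x) = imult ((T ^^ n) x)"
  by (induction n) (simp_all add: imult_commute)

lemma linear_funpow: "linear (T ^^ n)"
  by (rule bounded_linear.linear[OF bounded_linear_funpow[OF T.bounded_linear_axioms]])

lemma norm_funpow_sq_le: "(norm ((T ^^ n) h))\<^sup>2 \<le> M * real (n + 1) * (norm h)\<^sup>2"
proof -
  have "norm ((T ^^ n) h) \<le> onorm (T ^^ n) * norm h"
    by (rule onorm[OF bounded_linear_funpow[OF T.bounded_linear_axioms]])
  then have "(norm ((T ^^ n) h))\<^sup>2 \<le> (onorm (T ^^ n))\<^sup>2 * (norm h)\<^sup>2"
    by (simp add: power_mono power_mult_distrib[symmetric])
  also have "\<dots> \<le> M * real (n + 1) * (norm h)\<^sup>2"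
    using growth[of n] by (intro mult_right_mono) (simp_all add: divide_le_eq algebra_simps)
  finally show ?thesis .
qed

lemma M_nonneg: "0 \<le> M"
  using norm_funpow_sq_le[of 0] growth[of 0] by (metis order_trans zero_le_power2 div_by_1 of_nat_1 add_0)

definition delta :: "'a \<Rightarrow> 'a \<Rightarrow> real" where
  "delta u v = inner (T (T u)) (T (T v)) - 2 * inner (T u) (T v) + inner u v"

lemma delta_nonneg: "0 \<le> delta u u"
proof -
  have adjoint: "inner (adjoint T w) v = inner w (T v)" for w v
    by (metis inner_adjoint[OF T.bounded_linear_axioms] inner_commute)
  have "0 \<le> inner (adjoint T (adjoint T (T (T u))) - 2 *\<^sub>R adjoint T (T u) + u) u"
    using convex unfolding convex_op_def positive_op_def cinner_def by simp
  also have "\<dots> = delta u u"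
    by (simp add: adjoint inner_add_left inner_diff_left delta_def)
  finally show ?thesis .
qed

lemma delta_add: "delta (x + y) z = delta x z + delta y z"
  by (simp add: delta_def T.add inner_add_left algebra_simps)

lemma delta_scaleR: "delta (r *\<^sub>R x) y = r * delta x y"
  by (simp add: delta_def T.scale algebra_simps)

lemma delta_sym: "delta x y = delta y x"
  by (simp add: delta_def inner_commute)

lemma delta_imult: "delta (imult x) y = - delta x (imult y)"
  by (simp add: delta_def imult_commute inner_imult_left algebra_simps)

lemma abs_delta_le: "\<bar>delta u v\<bar> \<le> (delta u u + delta v v) / 2"
proof -
  have "(delta u v)\<^sup>2 \<le> delta u u * delta v v"
    by (rule psd_form_Cauchy_Schwarz[OF delta_add delta_scaleR delta_sym delta_nonneg])
  then have "\<bar>delta u v\<bar> \<le> sqrt (delta u u * delta v v)" by (intro real_le_rsqrt) simp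
  also have "\<dots> \<le> (delta u u + delta v v) / 2" by (rule arith_geo_mean_sqrt[OF delta_nonneg delta_nonneg])
  finally show ?thesis .
qed

lemma sum_delta_funpow_le: "(\<Sum>n<N. delta ((T ^^ n) h) ((T ^^ n) h)) \<le> (2 * M + 1) * (norm h)\<^sup>2"
proof -
  define a where "a n = (norm ((T ^^ n) h))\<^sup>2" for n
  define d where "d n = a (Suc n) - a n" for n
  have delta_d: "delta ((T ^^ n) h) ((T ^^ n) h) = d (Suc n) - d n" for n
    by (simp add: delta_def a_def d_def power2_norm_eq_inner)
  \<comment> \<open>by convexity the increments d n grow, so d N is at most the mean of d N, ..., d (2 N)\<close>
  have "mono d" by (rule incseq_SucI) (use delta_nonneg delta_d in smt)
  have "real (N + 1) * d N \<le> (\<Sum>k<N + 1. d (N + k))"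
    using sum_mono[of "{..<N + 1}" "\<lambda>_. d N" "\<lambda>k. d (N + k)"] monoD[OF \<open>mono d\<close>] by simp
  also have "\<dots> = a (N + (N + 1)) - a N"
    using sum_lessThan_telescope[of "\<lambda>k. a (N + k)" "N + 1"] by (simp add: d_def)
  also have "\<dots> \<le> a (N + (N + 1))" by (simp add: a_def)
  also have "\<dots> \<le> M * real (N + (N + 1) + 1) * (norm h)\<^sup>2"
    unfolding a_def by (rule norm_funpow_sq_le)
  also have "\<dots> = real (N + 1) * (2 * M * (norm h)\<^sup>2)" by (simp add: algebra_simps)
  finally have "d N \<le> 2 * M * (norm h)\<^sup>2" by (simp only: mult_le_cancel_left_pos[of "real (N + 1)"])
  moreover have "- d 0 \<le> (norm h)\<^sup>2" by (simp add: d_def a_def)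
  moreover have "(\<Sum>n<N. delta ((T ^^ n) h) ((T ^^ n) h)) = d N - d 0"
    by (simp add: delta_d sum_lessThan_telescope)
  ultimately show ?thesis by (simp add: algebra_simps)
qed

lemma summable_delta_funpow: "summable (\<lambda>n. delta ((T ^^ n) h) ((T ^^ n) g))"
proof (rule summable_comparison_test)
  show "\<exists>N. \<forall>n\<ge>N. norm (delta ((T ^^ n) h) ((T ^^ n) g))
      \<le> (delta ((T ^^ n) h) ((T ^^ n) h) + delta ((T ^^ n) g) ((T ^^ n) g)) / 2"
    using abs_delta_le by auto
  show "summable (\<lambda>n. (delta ((T ^^ n) h) ((T ^^ n) h) + delta ((T ^^ n) g) ((T ^^ n) g)) / 2)"
    by (intro summable_divide summable_add summableI_nonneg_bounded[OF delta_nonneg sum_delta_funpow_le])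
qed

definition Q :: "'a \<Rightarrow> 'a \<Rightarrow> real" where
  "Q h g = (\<Sum>n. delta ((T ^^ n) h) ((T ^^ n) g))"

lemma Q_add: "Q (x + y) z = Q x z + Q y z"
  unfolding Q_def
  by (simp add: linear_add[OF linear_funpow] delta_add suminf_add[OF summable_delta_funpow summable_delta_funpow])

lemma Q_scaleR: "Q (r *\<^sub>R x) y = r * Q x y"
  unfolding Q_def by (simp add: linear_scale[OF linear_funpow] delta_scaleR suminf_mult[OF summable_delta_funpow])

lemma Q_sym: "Q x y = Q y x"
  unfolding Q_def by (simp add: delta_sym[of "(T ^^ _) x"])

lemma Q_nonneg: "0 \<le> Q x x"
  unfolding Q_def by (intro suminf_nonneg summable_delta_funpow delta_nonneg)

lemma Q_le: "Q x x \<le> (2 * M + 1) * (norm x)\<^sup>2"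
  unfolding Q_def by (intro suminf_le_const summable_delta_funpow sum_delta_funpow_le)

lemma Q_imult: "Q (imult x) y = - Q x (imult y)"
proof -
  have "(\<lambda>n. delta ((T ^^ n) (imult x)) ((T ^^ n) y)) = (\<lambda>n. - delta ((T ^^ n) x) ((T ^^ n) (imult y)))"
    by (simp add: funpow_imult delta_imult)
  then show ?thesis
    unfolding Q_def by (simp only: suminf_minus[OF summable_delta_funpow])
qed

lemma Q_shift: "Q h g = delta h g + Q (T h) (T g)"
proof -
  have "(\<lambda>n. delta ((T ^^ Suc n) h) ((T ^^ Suc n) g)) = (\<lambda>n. delta ((T ^^ n) (T h)) ((T ^^ n) (T g)))"
    by (simp only: funpow_Suc_right o_def)
  then show ?thesis
    using suminf_split_head[OF summable_delta_funpow[of h g]] by (simp add: Q_def)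
qed

lemma abs_Q_le: "\<bar>Q x y\<bar> \<le> (2 * M + 1) * norm x * norm y"
proof -
  have "(Q x y)\<^sup>2 \<le> Q x x * Q y y"
    by (rule psd_form_Cauchy_Schwarz[OF Q_add Q_scaleR Q_sym Q_nonneg])
  also have "\<dots> \<le> ((2 * M + 1) * (norm x)\<^sup>2) * ((2 * M + 1) * (norm y)\<^sup>2)"
    using M_nonneg by (intro mult_mono Q_le Q_nonneg) simp_all
  also have "\<dots> = ((2 * M + 1) * norm x * norm y)\<^sup>2" by (simp add: power2_eq_square mult_ac)
  finally show ?thesis
    using M_nonneg by (rule_tac power2_le_imp_le) simp_all
qed

definition P :: "'a \<Rightarrow> 'a" where
  "P h = (SOME z. \<forall>g. Q h g = inner z g)"

lemma Q_eq_inner_P: "Q h g = inner (P h) g"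
proof -
  have "bounded_linear (Q h)"
    by (rule bounded_linear_intro[where K = "(2 * M + 1) * norm h"])
      (use abs_Q_le[of h] in \<open>simp_all add: Q_sym[of h] Q_add Q_scaleR mult_ac\<close>)
  then have "\<exists>z. \<forall>g. Q h g = inner z g" by (rule riesz_representation)
  then show ?thesis unfolding P_def by (rule someI2_ex) blast
qed

lemma P_self_adjoint: "inner (P h) g = inner h (P g)"
  by (metis Q_eq_inner_P Q_sym inner_commute)

lemma P_nonneg: "0 \<le> inner (P h) h"
  using Q_nonneg[of h] by (simp add: Q_eq_inner_P)

lemma P_imult: "P (imult h) = imult (P h)"
  by (subst vector_eq_rdot[symmetric]) (simp add: Q_eq_inner_P[symmetric] Q_imult inner_imult_left)

lemma bounded_linear_P: "bounded_linear P"
proof (rule bounded_linear_intro[where K = "2 * M + 1"])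
  show "P (x + y) = P x + P y" for x y
    by (subst vector_eq_rdot[symmetric]) (simp add: Q_eq_inner_P[symmetric] Q_add inner_add_left)
  show "P (r *\<^sub>R x) = r *\<^sub>R P x" for r x
    by (subst vector_eq_rdot[symmetric]) (simp add: Q_eq_inner_P[symmetric] Q_scaleR)
  show "norm (P x) \<le> norm x * (2 * M + 1)" for x
  proof (cases "P x = 0")
    case False
    have "norm (P x) * norm (P x) = Q x (P x)"
      by (simp add: Q_eq_inner_P power2_norm_eq_inner[symmetric] power2_eq_square)
    also have "\<dots> \<le> (2 * M + 1) * norm x * norm (P x)" using abs_Q_le by (rule abs_le_D1)
    finally show ?thesis using False by (simp add: mult_ac)
  qed (use M_nonneg in simp)
qed

definition R :: "'a \<Rightarrow> 'a" where
  "R = (SOME R. bounded_linear R \<and> (\<forall>h g. inner (R h) (R g) = inner (P h) g)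
                \<and> (\<forall>h. R (imult h) = imult (R h)))"

lemma
  shows bounded_linear_R: "bounded_linear R"
    and inner_R: "inner (R h) (R g) = Q h g"
    and R_imult: "R (imult h) = imult (R h)"
proof -
  obtain R' where "bounded_linear R'" and R'_inner: "\<And>h g. inner (R' h) (R' g) = inner (P h) g"
    and R'_commute: "\<And>U h. bounded_linear U \<Longrightarrow> (\<And>x. U (P x) = P (U x)) \<Longrightarrow> U (R' h) = R' (U h)"
    by (rule positive_operator_sqrt[OF bounded_linear_P P_self_adjoint P_nonneg]) auto
  have R'_imult: "R' (imult h) = imult (R' h)" for h
    using R'_commute[OF bounded_linear_imult P_imult[symmetric]] by simp
  let ?sqrt = "\<lambda>R. bounded_linear R \<and> (\<forall>h g. inner (R h) (R g) = inner (P h) g)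
      \<and> (\<forall>h. R (imult h) = imult (R h))"
  have "?sqrt R'" using \<open>bounded_linear R'\<close> R'_inner R'_imult by simp
  then have "?sqrt R" unfolding R_def by (rule someI[where P = ?sqrt])
  then show "bounded_linear R" "inner (R h) (R g) = Q h g" "R (imult h) = imult (R h)"
    by (simp_all add: Q_eq_inner_P)
qed

definition excess :: "'a \<Rightarrow> 'a \<Rightarrow> real" where
  "excess h g = inner (T h) (T g) + Q h g - inner h g"

lemma excess_T: "excess (T h) (T g) = excess h g"
  by (simp add: excess_def Q_shift[of h g] delta_def)

lemma excess_zero: "excess 0 h = 0"
  using Q_scaleR[of 0 0 h] by (simp add: excess_def)

lemma excess_le: "excess h h \<le> ((onorm T)\<^sup>2 + 2 * M) * (norm h)\<^sup>2"
proof -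
  have "(norm (T h))\<^sup>2 \<le> (onorm T)\<^sup>2 * (norm h)\<^sup>2"
    using power_mono[OF onorm[OF T.bounded_linear_axioms, of h] norm_ge_zero, of 2]
    by (simp add: power_mult_distrib)
  then show ?thesis
    using Q_le[of h] by (simp add: excess_def power2_norm_eq_inner algebra_simps)
qed

definition S_fun :: "(nat \<Rightarrow> 'a) \<Rightarrow> nat \<Rightarrow> 'a" where
  "S_fun f n = (if n = 0 then T (f 0) else if n = 1 then R (f 0) else f (n - 1))"

definition S :: "'a l2 \<Rightarrow> 'a l2" where
  "S x = Abs_l2 (S_fun (l2_fun x))"

definition V :: "'a \<Rightarrow> 'a l2" where
  "V h = Abs_l2 (\<lambda>n. if n = 0 then h else 0)"

lemma l2_fun_S: "l2_fun (S x) = S_fun (l2_fun x)"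
proof -
  have "summable (\<lambda>n. (norm (S_fun (l2_fun x) (n + 2)))\<^sup>2)"
    using summable_ignore_initial_segment[OF summable_l2_fun[of x], of 1] by (simp add: S_fun_def)
  then have "summable (\<lambda>n. (norm (S_fun (l2_fun x) n))\<^sup>2)"
    by (rule summable_iff_shift[THEN iffD1])
  then show ?thesis unfolding S_def by (simp add: Abs_l2_inverse)
qed

lemma l2_fun_V: "l2_fun (V h) = (\<lambda>n. if n = 0 then h else 0)"
proof -
  have "summable (\<lambda>n. (norm (if n = 0 then h else 0))\<^sup>2)"
    by (rule summable_finite[of "{0}"]) auto
  then show ?thesis unfolding V_def by (simp add: Abs_l2_inverse)
qed

lemma l2_fun_S_0: "l2_fun (S x) 0 = T (l2_fun x 0)"
  by (simp add: l2_fun_S S_fun_def)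

lemma inner_S: "inner (S x) (S y) = inner x y + excess (l2_fun x 0) (l2_fun y 0)"
proof -
  let ?f = "l2_fun x" and ?g = "l2_fun y"
  have "inner (S x) (S y) = (\<Sum>n. inner (S_fun ?f n) (S_fun ?g n))"
    by (simp add: inner_l2.rep_eq l2_fun_S)
  also have "\<dots> = (\<Sum>n. inner (?f (n + 1)) (?g (n + 1))) + inner (T (?f 0)) (T (?g 0)) + Q (?f 0) (?g 0)"
    using suminf_split_initial_segment[OF summable_l2_inner[OF summable_l2_fun summable_l2_fun], of "S x" "S y" 2]
    by (simp add: l2_fun_S S_fun_def inner_R numeral_2_eq_2)
  also have "(\<Sum>n. inner (?f (n + 1)) (?g (n + 1))) = inner x y - inner (?f 0) (?g 0)"
    using suminf_split_initial_segment[OF summable_l2_inner[OF summable_l2_fun summable_l2_fun], of x y 1]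
    by (simp add: inner_l2.rep_eq)
  finally show ?thesis by (simp add: excess_def)
qed

lemma bounded_clinear_S: "bounded_clinear_op S"
proof -
  interpret R: bounded_linear R by (rule bounded_linear_R)
  define K where "K = sqrt (1 + (onorm T)\<^sup>2 + 2 * M)"
  have "S (x + y) = S x + S y" "S (r *\<^sub>R x) = r *\<^sub>R S x" "S (imult x) = imult (S x)" for x y r
    by (simp_all add: l2_fun_inject[symmetric] l2_fun_S plus_l2.rep_eq scaleR_l2.rep_eq
        imult_l2.rep_eq fun_eq_iff S_fun_def T.add T.scale R.add R.scale imult_commute R_imult)
  moreover have "norm (S x) \<le> norm x * K" for x
  proof -
    have "(norm (l2_fun x 0))\<^sup>2 \<le> (norm x)\<^sup>2" by (rule power_mono[OF l2_coord_le norm_ge_zero])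
    then have "excess (l2_fun x 0) (l2_fun x 0) \<le> ((onorm T)\<^sup>2 + 2 * M) * (norm x)\<^sup>2"
      using excess_le[of "l2_fun x 0"] M_nonneg by (smt (verit) mult_left_mono zero_le_power2)
    then have "(norm (S x))\<^sup>2 \<le> (1 + (onorm T)\<^sup>2 + 2 * M) * (norm x)\<^sup>2"
      by (simp add: power2_norm_eq_inner inner_S algebra_simps)
    then show ?thesis unfolding K_def by (subst mult.commute) (rule norm_le_sqrt_mult_norm)
  qed
  ultimately have "bounded_linear S" by (intro bounded_linear_intro)
  then show ?thesis
    unfolding bounded_clinear_op_def using \<open>S (imult _) = imult (S _)\<close> by blast
qed

lemma inner_V: "inner (V h) y = inner h (l2_fun y 0)"
proof -
  have "(\<lambda>n. inner (l2_fun (V h) n) (l2_fun y n)) = (\<lambda>n. if n = 0 then inner h (l2_fun y n) else 0)"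
    by (simp add: l2_fun_V fun_eq_iff)
  then have "(\<lambda>n. inner (l2_fun (V h) n) (l2_fun y n)) sums inner h (l2_fun y 0)"
    using sums_single[of 0 "\<lambda>n. inner h (l2_fun y n)"] by simp
  then show ?thesis by (simp add: inner_l2.rep_eq sums_iff)
qed

lemma norm_V: "norm (V h) = norm h"
  using inner_V[of h "V h"] by (simp add: l2_fun_V norm_eq_sqrt_inner)

lemma bounded_clinear_V: "bounded_clinear_op V"
proof -
  have "V (x + y) = V x + V y" "V (r *\<^sub>R x) = r *\<^sub>R V x" "V (imult x) = imult (V x)" for x y r
    by (simp_all add: l2_fun_inject[symmetric] l2_fun_V plus_l2.rep_eq scaleR_l2.rep_eq
        imult_l2.rep_eq fun_eq_iff)
  then show ?thesis
    unfolding bounded_clinear_op_def by (auto intro: bounded_linear_intro[where K = 1] simp: norm_V)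
qed

lemma adjoint_V: "adjoint V y = l2_fun y 0"
  using inner_adjoint[of V] bounded_clinear_V inner_V
  by (metis bounded_clinear_op_def vector_eq_ldot)

lemma S_is_lifting: "is_lifting S V T"
  using bounded_clinear_S bounded_clinear_V
  by (simp add: is_lifting_def norm_V adjoint_V l2_fun_S_0)

lemma two_isometry_S: "two_isometry S"
  using bounded_clinear_S
  by (simp add: two_isometry_iff_inner bounded_clinear_op_def inner_S l2_fun_S_0 excess_T)

lemma complement_in_ker_S: "complement_in_ker S V"
  unfolding complement_in_ker_def
proof (intro allI impI)
  fix k assume "\<forall>h. cinner k (V h) = 0"
  then have "inner (V h) k = 0" for h
    by (auto simp: cinner_def complex_eq_iff inner_commute)
  then have "l2_fun k 0 = 0"
    by (metis inner_V inner_eq_zero_iff)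
  then have "inner (adjoint S (S k)) w = inner k w" for w
    using inner_adjoint[of S w "S k"] bounded_clinear_S
    by (simp add: bounded_clinear_op_def inner_S excess_zero inner_commute)
  then have "adjoint S (S k) = k"
    using vector_eq_rdot[of "adjoint S (S k)" k] by blast
  then show "adjoint S (S k) - k = 0" by simp
qed

end

theorem growth_imp_two_isometric_lifting:
  fixes T :: "'a::chilbert \<Rightarrow> 'a"
  assumes "bounded_clinear_op T" and "convex_op T"
    and "bdd_above (range (\<lambda>n. (onorm (T ^^ n))\<^sup>2 / real (n + 1)))"
  shows "\<exists>(S :: 'a l2 \<Rightarrow> 'a l2) V. is_lifting S V T \<and> two_isometry S \<and> complement_in_ker S V"
proof -
  obtain M where "\<And>n. (onorm (T ^^ n))\<^sup>2 / real (n + 1) \<le> M"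
    using assms(3) by (auto simp: bdd_above_def)
  then interpret convex_linear_growth T M
    using assms by unfold_locales
  show ?thesis using S_is_lifting two_isometry_S complement_in_ker_S by blast
qed

theorem theorem3p2:
  fixes T :: "'a::chilbert \<Rightarrow> 'a"
  assumes "bounded_clinear_op T"
    and "convex_op T"
  shows "((\<exists>(S :: 'b::chilbert \<Rightarrow> 'b) V. is_lifting S V T \<and> two_isometry S)
            \<longrightarrow> bdd_above (range (\<lambda>n. (onorm (T ^^ n))\<^sup>2 / real (n + 1))))
       \<and> (bdd_above (range (\<lambda>n. (onorm (T ^^ n))\<^sup>2 / real (n + 1)))
            \<longrightarrow> (\<exists>(S :: 'a l2 \<Rightarrow> 'a l2) V. is_lifting S V T \<and> two_isometry S
                   \<and> complement_in_ker S V))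
       \<and> ((\<exists>(S :: 'b \<Rightarrow> 'b) V. is_lifting S V T \<and> two_isometry S \<and> complement_in_ker S V)
            \<longrightarrow> (\<exists>(S :: 'b \<Rightarrow> 'b) V. is_lifting S V T \<and> two_isometry S))"
proof (intro conjI impI)
  assume "\<exists>(S :: 'b \<Rightarrow> 'b) V. is_lifting S V T \<and> two_isometry S"
  then obtain S :: "'b \<Rightarrow> 'b" and V where "is_lifting S V T" and "two_isometry S" by blast
  moreover have "bounded_linear T" using assms(1) by (simp add: bounded_clinear_op_def)
  ultimately show "bdd_above (range (\<lambda>n. (onorm (T ^^ n))\<^sup>2 / real (n + 1)))"
    by (intro two_isometric_lifting_imp_growth)
next
  assume "bdd_above (range (\<lambda>n. (onorm (T ^^ n))\<^sup>2 / real (n + 1)))"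
  then show "\<exists>(S :: 'a l2 \<Rightarrow> 'a l2) V. is_lifting S V T \<and> two_isometry S \<and> complement_in_ker S V"
    by (rule growth_imp_two_isometric_lifting[OF assms])
next
  assume "\<exists>(S :: 'b \<Rightarrow> 'b) V. is_lifting S V T \<and> two_isometry S \<and> complement_in_ker S V"
  then show "\<exists>(S :: 'b \<Rightarrow> 'b) V. is_lifting S V T \<and> two_isometry S" by blast
qed

end
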